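(* Assume the combination is perfect, and let $l$ be such that the indices $l_{\pm a}$, $\bar l_{\pm b}$ involved exist. Then: (1) $Q^{(l)}_{+a}=\sum_{a'}A^{(l)}_{+a,a'}w_{1,a'}$ is the linear form of the unique polynomials with $\deg A^{(l)}_{+a,a'}\le(\vec\nu_1(l-1)+\vec e_{1,a})_{a'}-1$, $A^{(l)}_{+a,a}$ monic of degree $\nu_{1,a}(l-1)$, and $\int Q^{(l)}_{+a}w_{2,b}x^kd\mu=0$ for $0\le k\le\nu_{2,b}(l-1)-1$, $b=1,\dots,p_2$ (type II normalized mixed multiple orthogonal system for $[\vec\nu_1(l-1)+\vec e_{1,a};\vec\nu_2(l-1)]$). (2) $Q^{(l)}_{-b}=\sum_{a'}A^{(l)}_{-b,a'}w_{1,a'}$ is the linear form of the unique polynomials with $\deg A^{(l)}_{-b,a'}\le\nu_{1,a'}(l)-1$ and $\int Q^{(l)}_{-b}w_{2,b'}x^kd\mu=\delta_{b,b'}\delta_{k,\nu_{2,b}(l)-1}$ for $0\le k\le\nu_{2,b'}(l)-1$, $b'=1,\dots,p_2$ (type I normalized system for $[\vec\nu_1(l);\vec\nu_2(l)-\vec e_{2,b}]$). (3) $\bar Q^{(l)}_{+b}=\sum_{b'}\bar A^{(l)}_{+b,b'}w_{2,b'}$ is the linear form of the unique polynomials with $\deg\bar A^{(l)}_{+b,b'}\le(\vec\nu_2(l-1)+\vec e_{2,b})_{b'}-1$, $\bar A^{(l)}_{+b,b}$ monic of degree $\nu_{2,b}(l-1)$, and $\int\bar Q^{(l)}_{+b}w_{1,a}x^kd\mu=0$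 for $0\le k\le\nu_{1,a}(l-1)-1$, $a=1,\dots,p_1$ (type II system for $[\vec\nu_2(l-1)+\vec e_{2,b};\vec\nu_1(l-1)]$). (4) $\bar Q^{(l)}_{-a}=\sum_{b'}\bar A^{(l)}_{-a,b'}w_{2,b'}$ is the linear form of the unique polynomials with $\deg\bar A^{(l)}_{-a,b'}\le\nu_{2,b'}(l)-1$ and $\int\bar Q^{(l)}_{-a}w_{1,a'}x^kd\mu=\delta_{a,a'}\delta_{k,\nu_{1,a}(l)-1}$ for $0\le k\le\nu_{1,a'}(l)-1$, $a'=1,\dots,p_1$ (type I system for $[\vec\nu_2(l);\vec\nu_1(l)-\vec e_{1,a}]$).
   Context: Setting: $\mu$ finite Borel measure on an interval $\Delta$ with infinitely many support points, not changing sign; weights $w_{1,a}$ ($a\le p_1$), $w_{2,b}$ ($b\le p_2$) real integrable, not changing sign; compositions $\vec n_\ell\in\mathbb N^{p_\ell}$. Each $i\in\mathbb Z_+$ is uniquely $i=q|\vec n_\ell|+n_{\ell,1}+\dots+n_{\ell,a-1}+r$ ($0\le r<n_{\ell,a}$); $a_\ell(i)=a$, $k_\ell(i)=qn_{\ell,a}+r$. Degree vectors $\nu_{\ell,a}(i)=\#\{0\le j\le i:a_\ell(j)=a\}$, $\vec\nu_\ell(-1)=0$; $\vec e_{\ell,a}$ is the $a$-th unit vector of $\mathbb Z^{p_\ell}$. $\chi_{\ell,a}(x)$: semi-infinite vector with $i$-th entry $x^{k_\ell(i)}$ if $a_\ell(i)=a$, else $0$; $(i)$ = $i$-th entry, $[l]$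 = first $l$ entries. Moment matrix $g_{i,j}=\int x^{k_1(i)+k_2(j)}w_{1,a_1(i)}w_{2,a_2(j)}d\mu$, $g^{[l]}=(g_{i,j})_{i,j<l}$. Perfect: for $|\vec\nu_1|=|\vec\nu_2|+1$, nontrivial $A_a$ with $\deg A_a\le\nu_{1,a}-1$ and $\int\sum_aA_aw_{1,a}w_{2,b}x^jd\mu=0$ ($j<\nu_{2,b}$, all $b$) force $\deg A_a=\nu_{1,a}-1$ for all $a$; then all $\det g^{[l]}\neq0$. $l_{+a}$ ($l_{-a}$) is the smallest (largest) integer $\ge l$ ($\le l$) with $a_1=a$; $\bar l_{\pm b}$ likewise with $a_2=b$. Associated polynomials: $A^{(l)}_{+a,a'}(y)=\chi_{1,a'}^{(l_{+a})}(y)-(g_{l_{+a},0},\dots,g_{l_{+a},l-1})(g^{[l]})^{-1}\chi_{1,a'}^{[l]}(y)$; $\bar A^{(l)}_{-a,b'}(x)=(\chi_{2,b'}^{[l+1]}(x))^\top(g^{[l+1]})^{-1}e_{l_{-a}}$; $A^{(l)}_{-b,a'}(y)=e_{\bar l_{-b}}^\top(g^{[l+1]})^{-1}\chi_{1,a'}^{[l+1]}(y)$; $\bar A^{(l)}_{+b,b'}(x)=\chi_{2,b'}^{(\bar l_{+b})}(x)-(\chi_{2,b'}^{[l]}(x))^\top(g^{[l]})^{-1}(g_{0,\bar l_{+b}},\dots,g_{l-1,\bar l_{+b}})^\top$ ($e_j$ canonical basis vectors of $\mathbb R^{l+1}$). *)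

theory Defs
  imports "HOL-Analysis.Analysis" "HOL-Computational_Algebra.Polynomial"
          "Jordan_Normal_Form.Gauss_Jordan_Elimination"
begin

(* Indices a of weights run over {0..<p} (the paper uses 1..p). *)

definition composition :: "(nat \<Rightarrow> nat) \<Rightarrow> nat \<Rightarrow> bool" where
  "composition n p \<longleftrightarrow> 1 \<le> p \<and> (\<forall>a<p. 0 < n a)"

definition csize :: "(nat \<Rightarrow> nat) \<Rightarrow> nat \<Rightarrow> nat" where
  "csize n p = (\<Sum>a<p. n a)"

text \<open>i = q|n| + n_0 + ... + n_(a-1) + r with 0 \<le> r < n_a; aidx gives a, kidx gives q n_a + r.\<close>
definition aidx :: "(nat \<Rightarrow> nat) \<Rightarrow> nat \<Rightarrow> nat \<Rightarrow> nat" where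
  "aidx n p i = (LEAST a. i mod csize n p < (\<Sum>j\<le>a. n j))"

definition kidx :: "(nat \<Rightarrow> nat) \<Rightarrow> nat \<Rightarrow> nat \<Rightarrow> nat" where
  "kidx n p i = (i div csize n p) * n (aidx n p i)
                + (i mod csize n p - (\<Sum>j<aidx n p i. n j))"

text \<open>nuv n p m a = nu_a(m - 1) = #{0 \<le> j \<le> m-1 : a(j) = a}; so nu(-1) = nuv n p 0 = 0.\<close>
definition nuv :: "(nat \<Rightarrow> nat) \<Rightarrow> nat \<Rightarrow> nat \<Rightarrow> nat \<Rightarrow> nat" where
  "nuv n p m a = card {j. j < m \<and> aidx n p j = a}"

definition unitv :: "nat \<Rightarrow> nat \<Rightarrow> nat" where
  "unitv a = (\<lambda>a'. if a' = a then 1 else 0)"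

definition chi :: "(nat \<Rightarrow> nat) \<Rightarrow> nat \<Rightarrow> nat \<Rightarrow> real \<Rightarrow> nat \<Rightarrow> real" where
  "chi n p a x i = (if aidx n p i = a then x ^ kidx n p i else 0)"

text \<open>Integration against the (sign-definite) measure d mu = sigma dM, sigma = +-1, M a positive measure.\<close>
definition mint :: "real \<Rightarrow> real measure \<Rightarrow> (real \<Rightarrow> real) \<Rightarrow> real" where
  "mint \<sigma> M f = \<sigma> * (\<integral>x. f x \<partial>M)"

definition msupport :: "real measure \<Rightarrow> real set" where
  "msupport M = {x. \<forall>e>0. emeasure M (ball x e) > 0}"

definition sign_definite :: "real measure \<Rightarrow> (real \<Rightarrow> real) \<Rightarrow> bool" where
  "sign_definite M w \<longleftrightarrow> (AE x in M. 0 \<le> w x) \<or> (AE x in M. w x \<le> 0)"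

definition gmom :: "real \<Rightarrow> real measure \<Rightarrow> (nat \<Rightarrow> nat) \<Rightarrow> nat \<Rightarrow> (nat \<Rightarrow> nat) \<Rightarrow> nat
     \<Rightarrow> (nat \<Rightarrow> real \<Rightarrow> real) \<Rightarrow> (nat \<Rightarrow> real \<Rightarrow> real) \<Rightarrow> nat \<Rightarrow> nat \<Rightarrow> real" where
  "gmom \<sigma> M n1 p1 n2 p2 w1 w2 i j =
     mint \<sigma> M (\<lambda>x. x ^ (kidx n1 p1 i + kidx n2 p2 j) * w1 (aidx n1 p1 i) x * w2 (aidx n2 p2 j) x)"

definition gtrunc :: "(nat \<Rightarrow> nat \<Rightarrow> real) \<Rightarrow> nat \<Rightarrow> real mat" where
  "gtrunc G l = mat l l (\<lambda>(i, j). G i j)"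

definition ginv :: "(nat \<Rightarrow> nat \<Rightarrow> real) \<Rightarrow> nat \<Rightarrow> real mat" where
  "ginv G l = the (mat_inverse (gtrunc G l))"

definition lplus :: "(nat \<Rightarrow> nat) \<Rightarrow> nat \<Rightarrow> nat \<Rightarrow> nat \<Rightarrow> nat" where
  "lplus n p l a = (LEAST m. l \<le> m \<and> aidx n p m = a)"

definition lminus :: "(nat \<Rightarrow> nat) \<Rightarrow> nat \<Rightarrow> nat \<Rightarrow> nat \<Rightarrow> nat" where
  "lminus n p l a = (GREATEST m. m \<le> l \<and> aidx n p m = a)"

definition linform :: "nat \<Rightarrow> (nat \<Rightarrow> real \<Rightarrow> real) \<Rightarrow> (nat \<Rightarrow> real poly) \<Rightarrow> real \<Rightarrow> real" where
  "linform p w A x = (\<Sum>a<p. poly (A a) x * w a x)"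

text \<open>Perfect combination (deg A \<le> m - 1 is rendered as: A = 0 or degree A < m).\<close>
definition perfect :: "real \<Rightarrow> real measure \<Rightarrow> nat \<Rightarrow> (nat \<Rightarrow> real \<Rightarrow> real) \<Rightarrow> nat
     \<Rightarrow> (nat \<Rightarrow> real \<Rightarrow> real) \<Rightarrow> bool" where
  "perfect \<sigma> M p1 w1 p2 w2 \<longleftrightarrow>
    (\<forall>(\<nu>1 :: nat \<Rightarrow> nat) (\<nu>2 :: nat \<Rightarrow> nat) (A :: nat \<Rightarrow> real poly).
       (\<Sum>a<p1. \<nu>1 a) = (\<Sum>b<p2. \<nu>2 b) + 1 \<and>
       (\<exists>a<p1. A a \<noteq> 0) \<and>
       (\<forall>a<p1. A a \<noteq> 0 \<longrightarrow> degree (A a) < \<nu>1 a) \<and>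
       (\<forall>b<p2. \<forall>j<\<nu>2 b. mint \<sigma> M (\<lambda>x. linform p1 w1 A x * w2 b x * x ^ j) = 0)
     \<longrightarrow> (\<forall>a<p1. 0 < \<nu>1 a \<longrightarrow> A a \<noteq> 0 \<and> degree (A a) = \<nu>1 a - 1))"

text \<open>Type II normalized mixed multiple orthogonal system for [nv + e_a; ev]
  (here nv' = nv + e_a is passed directly).\<close>
definition typeII :: "real \<Rightarrow> real measure \<Rightarrow> nat \<Rightarrow> (nat \<Rightarrow> real \<Rightarrow> real) \<Rightarrow> nat
     \<Rightarrow> (nat \<Rightarrow> real \<Rightarrow> real) \<Rightarrow> (nat \<Rightarrow> nat) \<Rightarrow> nat \<Rightarrow> (nat \<Rightarrow> nat) \<Rightarrow> (nat \<Rightarrow> real poly) \<Rightarrow> bool" where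
  "typeII \<sigma> M p w q v nv' a ev R \<longleftrightarrow>
     (\<forall>a'<p. R a' \<noteq> 0 \<longrightarrow> degree (R a') < nv' a') \<and>
     lead_coeff (R a) = 1 \<and> degree (R a) = nv' a - 1 \<and>
     (\<forall>b<q. \<forall>k<ev b. mint \<sigma> M (\<lambda>x. linform p w R x * v b x * x ^ k) = 0)"

text \<open>Type I normalized system for [nv; ev - e_b].\<close>
definition typeI :: "real \<Rightarrow> real measure \<Rightarrow> nat \<Rightarrow> (nat \<Rightarrow> real \<Rightarrow> real) \<Rightarrow> nat
     \<Rightarrow> (nat \<Rightarrow> real \<Rightarrow> real) \<Rightarrow> (nat \<Rightarrow> nat) \<Rightarrow> (nat \<Rightarrow> nat) \<Rightarrow> nat \<Rightarrow> (nat \<Rightarrow> real poly) \<Rightarrow> bool" where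
  "typeI \<sigma> M p w q v nv ev b R \<longleftrightarrow>
     (\<forall>a'<p. R a' \<noteq> 0 \<longrightarrow> degree (R a') < nv a') \<and>
     (\<forall>b'<q. \<forall>k<ev b'. mint \<sigma> M (\<lambda>x. linform p w R x * v b' x * x ^ k)
         = (if b' = b \<and> k = ev b - 1 then 1 else 0))"

definition Aplus :: "(nat \<Rightarrow> nat \<Rightarrow> real) \<Rightarrow> (nat \<Rightarrow> nat) \<Rightarrow> nat \<Rightarrow> nat \<Rightarrow> nat \<Rightarrow> nat \<Rightarrow> real \<Rightarrow> real" where
  "Aplus G n1 p1 l a a' y =
     chi n1 p1 a' y (lplus n1 p1 l a)
     - (\<Sum>i<l. \<Sum>j<l. G (lplus n1 p1 l a) j * ginv G l $$ (j, i) * chi n1 p1 a' y i)"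

definition Aminus :: "(nat \<Rightarrow> nat \<Rightarrow> real) \<Rightarrow> (nat \<Rightarrow> nat) \<Rightarrow> nat \<Rightarrow> (nat \<Rightarrow> nat) \<Rightarrow> nat
     \<Rightarrow> nat \<Rightarrow> nat \<Rightarrow> nat \<Rightarrow> real \<Rightarrow> real" where
  "Aminus G n1 p1 n2 p2 l b a' y =
     (\<Sum>j<Suc l. ginv G (Suc l) $$ (lminus n2 p2 l b, j) * chi n1 p1 a' y j)"

definition Abarplus :: "(nat \<Rightarrow> nat \<Rightarrow> real) \<Rightarrow> (nat \<Rightarrow> nat) \<Rightarrow> nat \<Rightarrow> nat \<Rightarrow> nat \<Rightarrow> nat \<Rightarrow> real \<Rightarrow> real" where
  "Abarplus G n2 p2 l b b' x =
     chi n2 p2 b' x (lplus n2 p2 l b)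
     - (\<Sum>i<l. \<Sum>j<l. chi n2 p2 b' x i * ginv G l $$ (i, j) * G j (lplus n2 p2 l b))"

definition Abarminus :: "(nat \<Rightarrow> nat \<Rightarrow> real) \<Rightarrow> (nat \<Rightarrow> nat) \<Rightarrow> nat \<Rightarrow> (nat \<Rightarrow> nat) \<Rightarrow> nat
     \<Rightarrow> nat \<Rightarrow> nat \<Rightarrow> nat \<Rightarrow> real \<Rightarrow> real" where
  "Abarminus G n1 p1 n2 p2 l a b' x =
     (\<Sum>i<Suc l. chi n2 p2 b' x i * ginv G (Suc l) $$ (i, lminus n1 p1 l a))"

end

theory Submission
  imports Defs "Jordan_Normal_Form.Determinant"
begin

text \<open>
  Enumerate the monomials \<open>x^k w1_a\<close> by \<open>i \<mapsto> (a1(i), k1(i))\<close>, and those of the second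
  family likewise. A linear form \<open>\<Sum>_a A_a w1_a\<close> with \<open>deg A_a < \<nu>1_a(m - 1)\<close> is then a
  coefficient vector \<open>c\<close> of length \<open>m\<close>, and its moments against the first \<open>m\<close> monomials
  \<open>x^k w2_b\<close> are the entries of \<open>c g^[m]\<close>. A nonzero \<open>c\<close> with \<open>c g^[m] = 0\<close> would violate
  perfectness, so every \<open>g^[m]\<close> is invertible. The type II conditions for \<open>A_+a\<close> fix its
  coefficient at \<open>l_+a\<close> to 1 and leave a linear system with matrix \<open>g^[l]\<close> for the others;
  the type I conditions make the coefficients of \<open>A_-b\<close> a row of \<open>(g^[l+1])^-1\<close>; uniqueness
  is invertibility once more. Exchanging the two families transposes \<open>g\<close> and the inverses of
  its truncations, which turns the statements for \<open>A\<close> into those for the barred polynomials.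
\<close>

section \<open>Indexing by a composition\<close>

abbreviation block_start :: "(nat \<Rightarrow> nat) \<Rightarrow> nat \<Rightarrow> nat" where
  "block_start n a \<equiv> \<Sum>j<a. n j"

lemma csize_pos: "composition n p \<Longrightarrow> 0 < csize n p"
  unfolding composition_def csize_def by (intro sum_pos2[of _ 0]) auto

lemma block_start_Suc_le_csize: "a < p \<Longrightarrow> block_start n a + n a \<le> csize n p"
  unfolding csize_def using sum_mono2[of "{..<p}" "{..<Suc a}" n] by simp

lemma aidx_eqI:
  assumes "a < p" "block_start n a \<le> i mod csize n p" "i mod csize n p < block_start n a + n a"
  shows "aidx n p i = a"
  unfolding aidx_def
proof (rule Least_equality)
  show "i mod csize n p < (\<Sum>j\<le>a. n j)"
    using assms(3) by (simp add: lessThan_Suc_atMost[symmetric])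
next
  fix y assume "i mod csize n p < (\<Sum>j\<le>y. n j)"
  then have "i mod csize n p < block_start n (Suc y)"
    by (simp add: lessThan_Suc_atMost[symmetric] del: sum.lessThan_Suc)
  then show "a \<le> y"
    using assms(2) sum_mono2[of "{..<a}" "{..<Suc y}" n] by (cases "a \<le> y") auto
qed

lemma aidx_bounds:
  assumes "composition n p"
  shows "aidx n p i < p \<and> block_start n (aidx n p i) \<le> i mod csize n p
         \<and> i mod csize n p < block_start n (aidx n p i) + n (aidx n p i)"
proof -
  let ?r = "i mod csize n p" and ?a = "aidx n p i"
  have upto: "(\<Sum>j\<le>a. n j) = block_start n a + n a" for a
    by (simp add: lessThan_Suc_atMost[symmetric])
  have "?r < csize n p" using csize_pos[OF assms] by simp
  moreover have "{..p - 1} = {..<p}" using assms by (auto simp: composition_def)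
  ultimately have ex: "?r < (\<Sum>j\<le>p - 1. n j)" by (simp add: csize_def)
  have least: "?r < (\<Sum>j\<le>?a. n j)"
    unfolding aidx_def by (rule LeastI[of "\<lambda>a. ?r < (\<Sum>j\<le>a. n j)", OF ex])
  have min: "?r < (\<Sum>j\<le>y. n j) \<Longrightarrow> ?a \<le> y" for y
    unfolding aidx_def by (rule Least_le)
  have "?a < p" using min[OF ex] assms by (auto simp: composition_def)
  moreover have "block_start n ?a \<le> ?r"
  proof (cases ?a)
    case (Suc b)
    then have "\<not> ?r < (\<Sum>j\<le>b. n j)" using min[of b] by auto
    then show ?thesis using Suc by (simp add: upto)
  qed simp
  ultimately show ?thesis using least by (simp add: upto)
qed

lemma aidx_less: "composition n p \<Longrightarrow> aidx n p i < p"
  using aidx_bounds by blast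

lemma aidx_eq_iff:
  assumes "composition n p"
  shows "aidx n p i = a \<longleftrightarrow>
    a < p \<and> block_start n a \<le> i mod csize n p \<and> i mod csize n p < block_start n a + n a"
  using aidx_bounds[OF assms, of i] aidx_eqI[of a p n i] by blast

lemma nuv_0 [simp]: "nuv n p 0 a = 0"
  by (simp add: nuv_def)

lemma nuv_Suc: "nuv n p (Suc m) a = nuv n p m a + (if aidx n p m = a then 1 else 0)"
proof -
  have "{j. j < Suc m \<and> aidx n p j = a} =
    (if aidx n p m = a then insert m {j. j < m \<and> aidx n p j = a} else {j. j < m \<and> aidx n p j = a})"
    by (auto simp: less_Suc_eq)
  then show ?thesis by (simp add: nuv_def)
qed

lemma nuv_mono: "m \<le> m' \<Longrightarrow> nuv n p m a \<le> nuv n p m' a"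
  unfolding nuv_def by (rule card_mono) auto

lemma nuv_closed_form:
  assumes c: "composition n p" and a: "a < p"
  shows "nuv n p i a = i div csize n p * n a + min (n a) (i mod csize n p - block_start n a)"
proof (induction i)
  case (Suc i)
  let ?cs = "csize n p" and ?r = "i mod csize n p"
  have "0 < n a" using c a by (simp add: composition_def)
  moreover have "block_start n a + n a \<le> ?cs" using block_start_Suc_le_csize[OF a] .
  moreover have "?r < ?cs" using csize_pos[OF c] by simp
  moreover have "aidx n p i = a \<longleftrightarrow> block_start n a \<le> ?r \<and> ?r < block_start n a + n a"
    using aidx_eq_iff[OF c] a by blast
  moreover have "Suc i mod ?cs = (if Suc ?r = ?cs then 0 else Suc ?r)"
    and "Suc i div ?cs = (if Suc ?r = ?cs then Suc (i div ?cs) else i div ?cs)"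
    using mod_Suc[of i ?cs] div_Suc[of i ?cs] by auto
  ultimately show ?case
    using Suc.IH by (auto simp: nuv_Suc min_def split: if_splits)
qed simp

lemma kidx_eq_nuv:
  assumes c: "composition n p"
  shows "kidx n p i = nuv n p i (aidx n p i)"
proof -
  let ?a = "aidx n p i"
  have "min (n ?a) (i mod csize n p - block_start n ?a) = i mod csize n p - block_start n ?a"
    using aidx_bounds[OF c, of i] by (auto simp: min_def)
  then show ?thesis by (simp add: kidx_def nuv_closed_form[OF c aidx_less[OF c]])
qed

lemma kidx_less_nuv:
  assumes "composition n p" "i < m"
  shows "kidx n p i < nuv n p m (aidx n p i)"
proof -
  have "kidx n p i < nuv n p (Suc i) (aidx n p i)" by (simp add: kidx_eq_nuv[OF assms(1)] nuv_Suc)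
  also have "\<dots> \<le> nuv n p m (aidx n p i)" using assms(2) by (intro nuv_mono) simp
  finally show ?thesis .
qed

lemma aidx_kidx_inj:
  assumes c: "composition n p"
    and "aidx n p i = aidx n p j" "kidx n p i = kidx n p j"
  shows "i = j"
proof -
  have "kidx n p i < kidx n p j" if "i < j" "aidx n p i = aidx n p j" for i j
    using kidx_less_nuv[OF c that(1)] that(2) kidx_eq_nuv[OF c, of j] by simp
  then show ?thesis using assms(2,3) by (metis less_irrefl nat_neq_iff)
qed

lemma kidx_bij_betw:
  assumes c: "composition n p"
  shows "bij_betw (kidx n p) {i. i < m \<and> aidx n p i = a} {..<nuv n p m a}"
proof -
  let ?S = "{i. i < m \<and> aidx n p i = a}"
  have inj: "inj_on (kidx n p) ?S"
  proof (rule inj_onI)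
    fix i j assume "i \<in> ?S" "j \<in> ?S" and k: "kidx n p i = kidx n p j"
    then have "aidx n p i = aidx n p j" by simp
    from aidx_kidx_inj[OF c this k] show "i = j" .
  qed
  have "kidx n p ` ?S \<subseteq> {..<nuv n p m a}"
    using kidx_less_nuv[OF c] by fastforce
  moreover have "card (kidx n p ` ?S) = card {..<nuv n p m a}"
    using card_image[OF inj] by (simp add: nuv_def)
  ultimately have "kidx n p ` ?S = {..<nuv n p m a}"
    by (intro card_subset_eq) simp_all
  with inj show ?thesis by (simp add: bij_betw_def)
qed

lemma kidx_surj:
  assumes "composition n p" "k < nuv n p m a"
  obtains j where "j < m" "aidx n p j = a" "kidx n p j = k"
proof -
  have "k \<in> kidx n p ` {i. i < m \<and> aidx n p i = a}"
    using bij_betw_imp_surj_on[OF kidx_bij_betw[OF assms(1)]] assms(2) by simp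
  then show ?thesis using that by blast
qed

lemma sum_nuv:
  assumes c: "composition n p"
  shows "(\<Sum>a<p. nuv n p m a) = m"
proof -
  have "(\<Sum>a<p. nuv n p m a) = (\<Sum>a<p. \<Sum>j<m. if aidx n p j = a then 1 else 0)"
    unfolding nuv_def by (intro sum.cong refl) (simp add: sum.If_cases Int_def conj_commute)
  also have "\<dots> = (\<Sum>j<m. \<Sum>a<p. if aidx n p j = a then 1 else 0)" by (rule sum.swap)
  also have "\<dots> = m" using aidx_less[OF c] by simp
  finally show ?thesis .
qed

lemma aidx_exists_ge:
  assumes c: "composition n p" and a: "a < p"
  shows "\<exists>m\<ge>l. aidx n p m = a"
proof -
  let ?m = "l * csize n p + block_start n a"
  have "block_start n a < csize n p"
    using block_start_Suc_le_csize[OF a, of n] c a by (auto simp: composition_def)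
  moreover have "0 < n a" using c a by (simp add: composition_def)
  ultimately have "aidx n p ?m = a" using a by (intro aidx_eqI) auto
  moreover have "l \<le> ?m"
    using csize_pos[OF c] by (simp add: trans_le_add1)
  ultimately show ?thesis by blast
qed

lemma nuv_eq_if_no_occurrence:
  assumes "l \<le> L" "\<And>j. l \<le> j \<Longrightarrow> j < L \<Longrightarrow> aidx n p j \<noteq> a"
  shows "nuv n p L a = nuv n p l a"
proof -
  have "j < L \<and> aidx n p j = a \<longleftrightarrow> j < l \<and> aidx n p j = a" for j
    using assms by (cases "l \<le> j") auto
  then have "{j. j < L \<and> aidx n p j = a} = {j. j < l \<and> aidx n p j = a}"
    by blast
  then show ?thesis by (simp add: nuv_def)
qed

lemma
  assumes c: "composition n p" and a: "a < p"
  shows lplus_ge: "l \<le> lplus n p l a" and aidx_lplus: "aidx n p (lplus n p l a) = a"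
    and kidx_lplus: "kidx n p (lplus n p l a) = nuv n p l a"
proof -
  let ?P = "\<lambda>m. l \<le> m \<and> aidx n p m = a"
  have P: "?P (lplus n p l a)"
    unfolding lplus_def using aidx_exists_ge[OF c a] by (rule LeastI_ex)
  then show "l \<le> lplus n p l a" "aidx n p (lplus n p l a) = a" by auto
  have "aidx n p j \<noteq> a" if "l \<le> j" "j < lplus n p l a" for j
    using not_less_Least[OF that(2)[unfolded lplus_def]] that(1) by blast
  then have "nuv n p (lplus n p l a) a = nuv n p l a"
    using P by (intro nuv_eq_if_no_occurrence) auto
  then show "kidx n p (lplus n p l a) = nuv n p l a" using P by (simp add: kidx_eq_nuv[OF c])
qed

lemma
  assumes c: "composition n p" and ex: "\<exists>m\<le>l. aidx n p m = b"
  shows lminus_le: "lminus n p l b \<le> l" and aidx_lminus: "aidx n p (lminus n p l b) = b"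
    and kidx_lminus: "kidx n p (lminus n p l b) = nuv n p (Suc l) b - 1"
proof -
  let ?L = "lminus n p l b"
  have P: "?L \<le> l \<and> aidx n p ?L = b"
    unfolding lminus_def using ex by (rule GreatestI_ex_nat[where b = l]) auto
  then show "?L \<le> l" "aidx n p ?L = b" by auto
  have le: "j \<le> ?L" if "j \<le> l" "aidx n p j = b" for j
    unfolding lminus_def using that by (intro Greatest_le_nat[where b = l]) auto
  have "aidx n p j \<noteq> b" if "Suc ?L \<le> j" "j < Suc l" for j
  proof
    assume "aidx n p j = b"
    then have "j \<le> ?L" using le that(2) by simp
    with that(1) show False by simp
  qed
  then have "nuv n p (Suc l) b = nuv n p (Suc ?L) b"
    using P by (intro nuv_eq_if_no_occurrence) auto
  then show "kidx n p ?L = nuv n p (Suc l) b - 1"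
    using P by (simp add: kidx_eq_nuv[OF c] nuv_Suc)
qed

section \<open>Polynomials from coefficient vectors\<close>

text \<open>The coefficient vector \<open>c\<close>, supported on \<open>I\<close>, stands for the linear form
  \<open>\<Sum>i\<in>I. c i * x ^ kidx i * w (aidx i)\<close>; this is its polynomial at the weight \<open>a\<close>.\<close>

definition poly_of_coeffs ::
    "(nat \<Rightarrow> nat) \<Rightarrow> nat \<Rightarrow> (nat \<Rightarrow> real) \<Rightarrow> nat set \<Rightarrow> nat \<Rightarrow> real poly" where
  "poly_of_coeffs n p c I a = (\<Sum>i\<in>{i\<in>I. aidx n p i = a}. monom (c i) (kidx n p i))"

lemma poly_poly_of_coeffs:
  assumes "finite I"
  shows "poly (poly_of_coeffs n p c I a) y = (\<Sum>i\<in>I. c i * chi n p a y i)"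
proof -
  have "poly (poly_of_coeffs n p c I a) y = (\<Sum>i\<in>{i\<in>I. aidx n p i = a}. c i * y ^ kidx n p i)"
    by (simp add: poly_of_coeffs_def poly_sum poly_monom)
  also have "\<dots> = (\<Sum>i\<in>I. c i * chi n p a y i)"
    unfolding sum.inter_filter[OF assms] chi_def by (intro sum.cong refl) simp
  finally show ?thesis .
qed

lemma linform_poly_of_coeffs:
  assumes c: "composition n p" and "finite I"
  shows "linform p w (poly_of_coeffs n p c I) x = (\<Sum>i\<in>I. c i * x ^ kidx n p i * w (aidx n p i) x)"
proof -
  have "linform p w (poly_of_coeffs n p c I) x = (\<Sum>i\<in>I. \<Sum>a<p. c i * chi n p a x i * w a x)"
    unfolding linform_def poly_poly_of_coeffs[OF assms(2)]
    by (simp add: sum_distrib_right sum.swap[of _ I])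
  also have "\<dots> = (\<Sum>i\<in>I. c i * x ^ kidx n p i * w (aidx n p i) x)"
    using aidx_less[OF c] by (simp add: chi_def if_distrib if_distribR cong: if_cong)
  finally show ?thesis .
qed

lemma coeff_poly_of_coeffs:
  "coeff (poly_of_coeffs n p c I a) k = (\<Sum>i\<in>{i\<in>I. aidx n p i = a}. if kidx n p i = k then c i else 0)"
  unfolding poly_of_coeffs_def coeff_sum coeff_monom by simp

lemma coeff_poly_of_coeffs_eq_0:
  assumes "\<And>i. i \<in> I \<Longrightarrow> aidx n p i = a \<Longrightarrow> kidx n p i < K" "K \<le> k"
  shows "coeff (poly_of_coeffs n p c I a) k = 0"
  using assms unfolding coeff_poly_of_coeffs by (intro sum.neutral) fastforce

lemma coeff_poly_of_coeffs_kidx: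
  assumes c: "composition n p" and "finite I" "i \<in> I"
  shows "coeff (poly_of_coeffs n p c I (aidx n p i)) (kidx n p i) = c i"
proof -
  have "(if kidx n p j = kidx n p i then c j else 0) = (if j = i then c j else 0)"
    if "aidx n p j = aidx n p i" for j
    using aidx_kidx_inj[OF c that] by auto
  then show ?thesis
    unfolding coeff_poly_of_coeffs using assms(2,3) by (simp add: sum.If_cases)
qed

lemma poly_of_coeffs_coeff:
  assumes c: "composition n p" and a: "a < p"
    and bound: "\<forall>a<p. \<forall>k\<ge>nuv n p m a. coeff (D a) k = 0"
  shows "poly_of_coeffs n p (\<lambda>i. coeff (D (aidx n p i)) (kidx n p i)) {..<m} a = D a"
proof -
  have "poly_of_coeffs n p (\<lambda>i. coeff (D (aidx n p i)) (kidx n p i)) {..<m} a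
        = (\<Sum>i\<in>{i. i < m \<and> aidx n p i = a}. monom (coeff (D a) (kidx n p i)) (kidx n p i))"
    unfolding poly_of_coeffs_def by (intro sum.cong) auto
  also have "\<dots> = (\<Sum>k<nuv n p m a. monom (coeff (D a) k) k)"
    by (rule sum.reindex_bij_betw[OF kidx_bij_betw[OF c]])
  also have "\<dots> = D a"
  proof (rule poly_eqI)
    fix j show "coeff (\<Sum>k<nuv n p m a. monom (coeff (D a) k) k) j = coeff (D a) j"
      using bound a by (cases "j < nuv n p m a") (auto simp: coeff_sum coeff_monom)
  qed
  finally show ?thesis .
qed

lemma coeffs_vanish_iff_degree_less:
  "(\<forall>k\<ge>K. coeff q k = 0) \<longleftrightarrow> (q \<noteq> 0 \<longrightarrow> degree q < K)"
proof
  assume "\<forall>k\<ge>K. coeff q k = 0"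
  then show "q \<noteq> 0 \<longrightarrow> degree q < K" using leading_coeff_0_iff not_le by blast
next
  assume "q \<noteq> 0 \<longrightarrow> degree q < K"
  then show "\<forall>k\<ge>K. coeff q k = 0" by (cases "q = 0") (auto intro: coeff_eq_0)
qed

section \<open>Truncated moment matrices\<close>

definition truncations_nonsingular :: "(nat \<Rightarrow> nat \<Rightarrow> real) \<Rightarrow> bool" where
  "truncations_nonsingular G \<longleftrightarrow> (\<forall>L. Determinant.det (gtrunc G L) \<noteq> 0)"

lemma gtrunc_carrier [simp]: "gtrunc G L \<in> carrier_mat L L"
  by (simp add: gtrunc_def)

lemma ginv_inverse:
  assumes "Determinant.det (gtrunc G L) \<noteq> 0"
  shows "gtrunc G L * ginv G L = 1\<^sub>m L" "ginv G L * gtrunc G L = 1\<^sub>m L"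
    and "ginv G L \<in> carrier_mat L L"
proof -
  have "gtrunc G L \<in> Units (ring_mat TYPE(real) L ())"
    using det_non_zero_imp_unit[OF gtrunc_carrier assms] .
  then obtain B where B: "mat_inverse (gtrunc G L) = Some B"
    using mat_inverse(1)[OF gtrunc_carrier, where b = "()"] by (cases "mat_inverse (gtrunc G L)") auto
  then have "ginv G L = B" by (simp add: ginv_def)
  then show "gtrunc G L * ginv G L = 1\<^sub>m L" "ginv G L * gtrunc G L = 1\<^sub>m L"
    and "ginv G L \<in> carrier_mat L L"
    using mat_inverse(2)[OF gtrunc_carrier B] by auto
qed

lemma ginv_left_inverse:
  assumes "Determinant.det (gtrunc G L) \<noteq> 0" "i < L" "k < L"
  shows "(\<Sum>j<L. ginv G L $$ (i, j) * G j k) = (if i = k then 1 else 0)"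
proof -
  have "(ginv G L * gtrunc G L) $$ (i, k) = (\<Sum>j<L. ginv G L $$ (i, j) * G j k)"
    using assms(2,3) ginv_inverse(3)[OF assms(1)]
    by (auto simp: scalar_prod_def gtrunc_def lessThan_atLeast0 intro!: sum.cong)
  then show ?thesis using ginv_inverse(2)[OF assms(1)] assms(2,3) by simp
qed

lemma ginv_right_inverse:
  assumes "Determinant.det (gtrunc G L) \<noteq> 0" "i < L" "k < L"
  shows "(\<Sum>j<L. G i j * ginv G L $$ (j, k)) = (if i = k then 1 else 0)"
proof -
  have "(gtrunc G L * ginv G L) $$ (i, k) = (\<Sum>j<L. G i j * ginv G L $$ (j, k))"
    using assms(2,3) ginv_inverse(3)[OF assms(1)]
    by (auto simp: scalar_prod_def gtrunc_def lessThan_atLeast0 intro!: sum.cong)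
  then show ?thesis using ginv_inverse(1)[OF assms(1)] assms(2,3) by simp
qed

lemma left_null_gtrunc_eq_0:
  assumes "Determinant.det (gtrunc G L) \<noteq> 0" and null: "\<forall>j<L. (\<Sum>i<L. c i * G i j) = 0"
    and "k < L"
  shows "c k = 0"
proof -
  have "c k = (\<Sum>i<L. if i = k then c i else 0)" using assms(3) by simp
  also have "\<dots> = (\<Sum>i<L. c i * (\<Sum>j<L. G i j * ginv G L $$ (j, k)))"
    using ginv_right_inverse[OF assms(1) _ assms(3)] by (intro sum.cong) auto
  also have "\<dots> = (\<Sum>i<L. \<Sum>j<L. c i * G i j * ginv G L $$ (j, k))"
    by (simp add: sum_distrib_left mult.assoc)
  also have "\<dots> = (\<Sum>j<L. (\<Sum>i<L. c i * G i j) * ginv G L $$ (j, k))"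
    by (subst sum.swap) (simp add: sum_distrib_right)
  also have "\<dots> = 0" using null by simp
  finally show ?thesis .
qed

lemma det_gtrunc_nonzero:
  assumes "\<And>c. \<forall>j<L. (\<Sum>i<L. c i * G i j) = 0 \<Longrightarrow> \<forall>i<L. c i = 0"
  shows "Determinant.det (gtrunc G L) \<noteq> 0"
proof
  let ?A = "gtrunc G L"
  assume "Determinant.det ?A = 0"
  then have "Determinant.det (transpose_mat ?A) = 0" by (simp add: det_transpose[OF gtrunc_carrier])
  then have "\<exists>v. v \<in> carrier_vec L \<and> v \<noteq> 0\<^sub>v L \<and> transpose_mat ?A *\<^sub>v v = 0\<^sub>v L"
    using det_0_iff_vec_prod_zero_field[of "transpose_mat ?A" L] by simp
  then obtain v where v: "v \<in> carrier_vec L" "v \<noteq> 0\<^sub>v L" "transpose_mat ?A *\<^sub>v v = 0\<^sub>v L"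
    by blast
  have "(\<Sum>i<L. v $ i * G i j) = 0" if "j < L" for j
  proof -
    have "(\<Sum>i<L. v $ i * G i j) = (transpose_mat ?A *\<^sub>v v) $ j"
      using that v(1) by (auto simp: scalar_prod_def gtrunc_def lessThan_atLeast0 intro!: sum.cong)
    also have "\<dots> = 0" using v(3) that by simp
    finally show ?thesis .
  qed
  then have "v = 0\<^sub>v L" using assms[of "\<lambda>i. v $ i"] v(1) by (intro eq_vecI) simp_all
  with v(2) show False ..
qed

text \<open>Use \<open>gtrunc_transpose\<close> only instantiated: every \<open>gtrunc G L\<close> matches its left-hand
  side (take \<open>\<lambda>i j. G j i\<close> for the bound function), so as a rewrite rule it loops.\<close>

lemma gtrunc_transpose: "gtrunc (\<lambda>i j. G j i) L = transpose_mat (gtrunc G L)"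
  by (rule eq_matI) (auto simp: gtrunc_def)

lemma truncations_nonsingular_transpose:
  "truncations_nonsingular G \<Longrightarrow> truncations_nonsingular (\<lambda>i j. G j i)"
  unfolding truncations_nonsingular_def gtrunc_transpose[of G]
  by (simp add: det_transpose[OF gtrunc_carrier])

lemma ginv_transpose:
  assumes d: "Determinant.det (gtrunc G L) \<noteq> 0"
  shows "ginv (\<lambda>i j. G j i) L = transpose_mat (ginv G L)"
proof -
  let ?A = "gtrunc G L" and ?B = "ginv G L" and ?B' = "ginv (\<lambda>i j. G j i) L"
  have d': "Determinant.det (gtrunc (\<lambda>i j. G j i) L) \<noteq> 0"
    using d by (simp add: gtrunc_transpose[of G] det_transpose[OF gtrunc_carrier])
  have B: "?B \<in> carrier_mat L L" "?B * ?A = 1\<^sub>m L" using ginv_inverse[OF d] by auto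
  have B': "?B' \<in> carrier_mat L L" "?B' * transpose_mat ?A = 1\<^sub>m L"
    using ginv_inverse[OF d'] by (auto simp: gtrunc_transpose[of G])
  have "transpose_mat ?A * transpose_mat ?B = transpose_mat (?B * ?A)"
    using B(1) by (simp add: transpose_mult[of ?B L L ?A L])
  also have "\<dots> = 1\<^sub>m L" using B(2) by simp
  finally have "transpose_mat ?A * transpose_mat ?B = 1\<^sub>m L" .
  then have "?B' = ?B' * (transpose_mat ?A * transpose_mat ?B)" using B'(1) by simp
  also have "\<dots> = (?B' * transpose_mat ?A) * transpose_mat ?B"
    using B(1) B'(1) by (simp add: assoc_mult_mat[of _ L L _ L _ L])
  also have "\<dots> = transpose_mat ?B" using B'(2) B(1) by simp
  finally show ?thesis .
qed

section \<open>Moments of linear forms\<close>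

locale mixed_moments =
  fixes \<sigma> :: real and M :: "real measure" and n1 :: "nat \<Rightarrow> nat" and p1 :: nat
    and n2 :: "nat \<Rightarrow> nat" and p2 :: nat and w1 w2 :: "nat \<Rightarrow> real \<Rightarrow> real"
  assumes comp1: "composition n1 p1" and comp2: "composition n2 p2"
    and moments: "\<forall>a<p1. \<forall>b<p2. \<forall>k. integrable M (\<lambda>x. x ^ k * w1 a x * w2 b x)"
begin

abbreviation mom :: "nat \<Rightarrow> nat \<Rightarrow> real" where
  "mom \<equiv> gmom \<sigma> M n1 p1 n2 p2 w1 w2"

lemma mint_linform_poly_of_coeffs:
  assumes "finite I"
  shows "mint \<sigma> M (\<lambda>x. linform p1 w1 (poly_of_coeffs n1 p1 c I) x * w2 (aidx n2 p2 j) x * x ^ kidx n2 p2 j)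
     = (\<Sum>i\<in>I. c i * mom i j)"
proof -
  let ?f = "\<lambda>i x. x ^ (kidx n1 p1 i + kidx n2 p2 j) * w1 (aidx n1 p1 i) x * w2 (aidx n2 p2 j) x"
  have "(\<lambda>x. linform p1 w1 (poly_of_coeffs n1 p1 c I) x * w2 (aidx n2 p2 j) x * x ^ kidx n2 p2 j)
      = (\<lambda>x. \<Sum>i\<in>I. c i * ?f i x)"
    unfolding linform_poly_of_coeffs[OF comp1 assms] sum_distrib_right by (simp add: power_add mult_ac)
  moreover have "integrable M (?f i)" for i
    using moments aidx_less[OF comp1] aidx_less[OF comp2] by blast
  ultimately show ?thesis
    by (simp add: mint_def gmom_def sum_distrib_left mult_ac)
qed

lemma integrable_linform:
  assumes "b < p2"
  shows "integrable M (\<lambda>x. linform p1 w1 R x * w2 b x * x ^ k)"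
proof -
  have eq: "(\<lambda>x. linform p1 w1 R x * w2 b x * x ^ k) =
     (\<lambda>x. \<Sum>a<p1. \<Sum>i\<le>degree (R a). coeff (R a) i * (x ^ (i + k) * w1 a x * w2 b x))"
    unfolding linform_def poly_altdef
    by (simp add: fun_eq_iff sum_distrib_right sum_distrib_left power_add mult_ac)
  show ?thesis
    unfolding eq using moments assms
    by (intro Bochner_Integration.integrable_sum Bochner_Integration.integrable_mult_right) auto
qed

lemma mint_linform_diff:
  assumes "b < p2"
  shows "mint \<sigma> M (\<lambda>x. linform p1 w1 (\<lambda>a. R a - P a) x * w2 b x * x ^ k)
       = mint \<sigma> M (\<lambda>x. linform p1 w1 R x * w2 b x * x ^ k)
         - mint \<sigma> M (\<lambda>x. linform p1 w1 P x * w2 b x * x ^ k)"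
proof -
  have "linform p1 w1 (\<lambda>a. R a - P a) x = linform p1 w1 R x - linform p1 w1 P x" for x
    by (simp add: linform_def left_diff_distrib sum_subtractf)
  then show ?thesis
    using integrable_linform[OF assms, of R k] integrable_linform[OF assms, of P k]
    by (simp add: mint_def left_diff_distrib right_diff_distrib)
qed

text \<open>A nonzero left null vector of \<open>g^[L]\<close> yields a linear form which, for the multi-index
  \<open>[\<nu>1(L) + e_0; \<nu>2(L)]\<close>, perfectness forces to have a first polynomial of degree
  \<open>nuv L 0\<close>, although by construction its degree is smaller.\<close>

lemma truncations_nonsingular_if_perfect:
  assumes perf: "perfect \<sigma> M p1 w1 p2 w2"
  shows "truncations_nonsingular mom"
  unfolding truncations_nonsingular_def
proof (rule allI, rule det_gtrunc_nonzero)
  fix L c assume null: "\<forall>j<L. (\<Sum>i<L. c i * mom i j) = 0"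
  show "\<forall>i<L. c i = 0"
  proof (rule ccontr)
    assume "\<not> (\<forall>i<L. c i = 0)"
    then obtain i0 where i0: "i0 < L" "c i0 \<noteq> 0" by blast
    define A where "A = poly_of_coeffs n1 p1 c {..<L}"
    define \<nu>1 where "\<nu>1 a = nuv n1 p1 L a + unitv 0 a" for a
    have p1: "0 < p1" using comp1 by (simp add: composition_def)
    have bound: "\<forall>k\<ge>nuv n1 p1 L a. coeff (A a) k = 0" for a
      unfolding A_def using kidx_less_nuv[OF comp1] by (intro allI impI coeff_poly_of_coeffs_eq_0) auto
    have size: "(\<Sum>a<p1. \<nu>1 a) = (\<Sum>b<p2. nuv n2 p2 L b) + 1"
      using p1 by (simp add: \<nu>1_def sum.distrib sum_nuv[OF comp1] sum_nuv[OF comp2] unitv_def)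
    have nonzero: "\<exists>a<p1. A a \<noteq> 0"
    proof (intro exI conjI)
      show "A (aidx n1 p1 i0) \<noteq> 0"
        using coeff_poly_of_coeffs_kidx[OF comp1, of "{..<L}" i0 c] i0 by (auto simp: A_def)
    qed (rule aidx_less[OF comp1])
    have "degree (A a) < nuv n1 p1 L a" if "A a \<noteq> 0" for a
      using bound[of a] that by (simp add: coeffs_vanish_iff_degree_less)
    then have degree: "\<forall>a<p1. A a \<noteq> 0 \<longrightarrow> degree (A a) < \<nu>1 a"
      by (simp add: \<nu>1_def trans_less_add1)
    have orthogonal: "\<forall>b<p2. \<forall>k<nuv n2 p2 L b. mint \<sigma> M (\<lambda>x. linform p1 w1 A x * w2 b x * x ^ k) = 0"
    proof (intro allI impI)
      fix b k assume "b < p2" "k < nuv n2 p2 L b"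
      then obtain j where "j < L" "aidx n2 p2 j = b" "kidx n2 p2 j = k"
        using kidx_surj[OF comp2] by blast
      then show "mint \<sigma> M (\<lambda>x. linform p1 w1 A x * w2 b x * x ^ k) = 0"
        using mint_linform_poly_of_coeffs[of "{..<L}" c j] null by (simp add: A_def)
    qed
    have "\<forall>a<p1. 0 < \<nu>1 a \<longrightarrow> A a \<noteq> 0 \<and> degree (A a) = \<nu>1 a - 1"
      using perf size nonzero degree orthogonal unfolding perfect_def by blast
    then have "A 0 \<noteq> 0 \<and> degree (A 0) = nuv n1 p1 L 0"
      using p1 by (simp add: \<nu>1_def unitv_def)
    then show False using bound[of 0] by (simp add: coeffs_vanish_iff_degree_less)
  qed
qed

end

locale regular_mixed_moments = mixed_moments +
  assumes nonsingular: "truncations_nonsingular mom"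
begin

lemma det_mom: "Determinant.det (gtrunc mom L) \<noteq> 0"
  using nonsingular by (simp add: truncations_nonsingular_def)

lemma linform_eq_0_if_orthogonal:
  assumes bound: "\<forall>a<p1. \<forall>k\<ge>nuv n1 p1 m a. coeff (D a) k = 0"
    and orth: "\<forall>b<p2. \<forall>k<nuv n2 p2 m b. mint \<sigma> M (\<lambda>x. linform p1 w1 D x * w2 b x * x ^ k) = 0"
    and "a < p1"
  shows "D a = 0"
proof -
  define c where "c i = coeff (D (aidx n1 p1 i)) (kidx n1 p1 i)" for i
  have D: "poly_of_coeffs n1 p1 c {..<m} a = D a" if "a < p1" for a
    unfolding c_def using poly_of_coeffs_coeff[OF comp1 that bound] .
  then have "linform p1 w1 D = linform p1 w1 (poly_of_coeffs n1 p1 c {..<m})"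
    by (simp add: linform_def fun_eq_iff)
  then have "(\<Sum>i<m. c i * mom i j) = 0" if "j < m" for j
    using mint_linform_poly_of_coeffs[of "{..<m}" c j] orth aidx_less[OF comp2]
      kidx_less_nuv[OF comp2 that] by simp
  then have "c i = 0" if "i < m" for i
    using left_null_gtrunc_eq_0[OF det_mom] that by blast
  then show "D a = 0"
    using D[OF assms(3)] by (simp add: poly_of_coeffs_def)
qed

lemma typeII_unique:
  assumes R: "typeII \<sigma> M p1 w1 p2 w2 (\<lambda>a'. nuv n1 p1 m a' + unitv a a') a (nuv n2 p2 m) R"
    and P: "typeII \<sigma> M p1 w1 p2 w2 (\<lambda>a'. nuv n1 p1 m a' + unitv a a') a (nuv n2 p2 m) P"
    and "a' < p1"
  shows "R a' = P a'"
proof -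
  have monic: "coeff (Q a) (nuv n1 p1 m a) = 1"
    if "typeII \<sigma> M p1 w1 p2 w2 (\<lambda>a'. nuv n1 p1 m a' + unitv a a') a (nuv n2 p2 m) Q" for Q
  proof -
    from that have lead: "lead_coeff (Q a) = 1"
      and "degree (Q a) = nuv n1 p1 m a + unitv a a - 1"
      unfolding typeII_def by blast+
    then have "degree (Q a) = nuv n1 p1 m a" by (simp add: unitv_def)
    with lead show ?thesis by metis
  qed
  have "coeff (R a'') k = coeff (P a'') k" if "a'' < p1" "nuv n1 p1 m a'' \<le> k" for a'' k
  proof (cases "a'' = a \<and> k = nuv n1 p1 m a")
    case True
    then show ?thesis using monic[OF R] monic[OF P] by simp
  next
    case False
    then have "nuv n1 p1 m a'' + unitv a a'' \<le> k" using that by (auto simp: unitv_def)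
    then show ?thesis
      using R P that by (simp add: typeII_def coeffs_vanish_iff_degree_less[symmetric])
  qed
  then have "\<forall>a''<p1. \<forall>k\<ge>nuv n1 p1 m a''. coeff (R a'' - P a'') k = 0" by simp
  moreover have "\<forall>b<p2. \<forall>k<nuv n2 p2 m b.
      mint \<sigma> M (\<lambda>x. linform p1 w1 (\<lambda>a''. R a'' - P a'') x * w2 b x * x ^ k) = 0"
    using R P by (simp add: typeII_def mint_linform_diff)
  ultimately have "R a' - P a' = 0" by (rule linform_eq_0_if_orthogonal[OF _ _ assms(3)])
  then show ?thesis by simp
qed

lemma typeI_unique:
  assumes R: "typeI \<sigma> M p1 w1 p2 w2 (nuv n1 p1 m) (nuv n2 p2 m) b R"
    and P: "typeI \<sigma> M p1 w1 p2 w2 (nuv n1 p1 m) (nuv n2 p2 m) b P"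
    and "a < p1"
  shows "R a = P a"
proof -
  have "\<forall>a<p1. \<forall>k\<ge>nuv n1 p1 m a. coeff (R a - P a) k = 0"
    using R P by (simp add: typeI_def coeffs_vanish_iff_degree_less[symmetric])
  moreover have "\<forall>b'<p2. \<forall>k<nuv n2 p2 m b'.
      mint \<sigma> M (\<lambda>x. linform p1 w1 (\<lambda>a. R a - P a) x * w2 b' x * x ^ k) = 0"
    using R P by (simp add: typeI_def mint_linform_diff)
  ultimately have "R a - P a = 0" by (rule linform_eq_0_if_orthogonal[OF _ _ assms(3)])
  then show ?thesis by simp
qed

section \<open>The associated polynomials\<close>

definition Aplus_coeffs :: "nat \<Rightarrow> nat \<Rightarrow> nat \<Rightarrow> real" where
  "Aplus_coeffs l a i = (if i = lplus n1 p1 l a then 1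
     else - (\<Sum>j<l. mom (lplus n1 p1 l a) j * ginv mom l $$ (j, i)))"

definition Aplus_polys :: "nat \<Rightarrow> nat \<Rightarrow> nat \<Rightarrow> real poly" where
  "Aplus_polys l a = poly_of_coeffs n1 p1 (Aplus_coeffs l a) (insert (lplus n1 p1 l a) {..<l})"

lemma poly_Aplus_polys:
  assumes "a < p1"
  shows "poly (Aplus_polys l a a') = Aplus mom n1 p1 l a a'"
proof
  fix y
  let ?L = "lplus n1 p1 l a"
  have "?L \<notin> {..<l}" using lplus_ge[OF comp1 assms, of l] by simp
  then have "poly (Aplus_polys l a a') y
      = chi n1 p1 a' y ?L + (\<Sum>i<l. Aplus_coeffs l a i * chi n1 p1 a' y i)"
    by (simp add: Aplus_polys_def poly_poly_of_coeffs Aplus_coeffs_def)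
  also have "(\<Sum>i<l. Aplus_coeffs l a i * chi n1 p1 a' y i)
      = - (\<Sum>i<l. \<Sum>j<l. mom ?L j * ginv mom l $$ (j, i) * chi n1 p1 a' y i)"
    using \<open>?L \<notin> {..<l}\<close>
    by (auto simp: Aplus_coeffs_def sum_distrib_right sum_negf intro!: sum.cong)
  finally show "poly (Aplus_polys l a a') y = Aplus mom n1 p1 l a a' y"
    by (simp add: Aplus_def)
qed

lemma coeff_Aplus_polys_eq_0:
  assumes "a < p1" "nuv n1 p1 l a' + unitv a a' \<le> k"
  shows "coeff (Aplus_polys l a a') k = 0"
  unfolding Aplus_polys_def
proof (rule coeff_poly_of_coeffs_eq_0[OF _ assms(2)])
  fix i assume "i \<in> insert (lplus n1 p1 l a) {..<l}" "aidx n1 p1 i = a'"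
  then show "kidx n1 p1 i < nuv n1 p1 l a' + unitv a a'"
    using aidx_lplus[OF comp1 assms(1)] kidx_lplus[OF comp1 assms(1)] kidx_less_nuv[OF comp1, of i l]
    by (auto simp: unitv_def)
qed

lemma coeff_Aplus_polys_top:
  assumes "a < p1"
  shows "coeff (Aplus_polys l a a) (nuv n1 p1 l a) = 1"
  using coeff_poly_of_coeffs_kidx[OF comp1, of "insert (lplus n1 p1 l a) {..<l}" "lplus n1 p1 l a"]
    aidx_lplus[OF comp1 assms] kidx_lplus[OF comp1 assms]
  by (simp add: Aplus_polys_def Aplus_coeffs_def)

lemma mint_Aplus_polys_orthogonal:
  assumes "a < p1" "b < p2" "k < nuv n2 p2 l b"
  shows "mint \<sigma> M (\<lambda>x. linform p1 w1 (Aplus_polys l a) x * w2 b x * x ^ k) = 0"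
proof -
  let ?L = "lplus n1 p1 l a" and ?B = "ginv mom l"
  obtain j where j: "j < l" "aidx n2 p2 j = b" "kidx n2 p2 j = k"
    using kidx_surj[OF comp2 assms(3)] by blast
  have "?L \<notin> {..<l}" using lplus_ge[OF comp1 assms(1), of l] by simp
  then have "mint \<sigma> M (\<lambda>x. linform p1 w1 (Aplus_polys l a) x * w2 b x * x ^ k)
      = mom ?L j + (\<Sum>i<l. Aplus_coeffs l a i * mom i j)"
    using mint_linform_poly_of_coeffs[of "insert ?L {..<l}" "Aplus_coeffs l a" j] j
    by (simp add: Aplus_polys_def Aplus_coeffs_def)
  also have "(\<Sum>i<l. Aplus_coeffs l a i * mom i j) = - (\<Sum>i<l. \<Sum>t<l. mom ?L t * ?B $$ (t, i) * mom i j)"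
    using \<open>?L \<notin> {..<l}\<close>
    by (auto simp: Aplus_coeffs_def sum_distrib_right sum_negf intro!: sum.cong)
  also have "(\<Sum>i<l. \<Sum>t<l. mom ?L t * ?B $$ (t, i) * mom i j)
      = (\<Sum>t<l. mom ?L t * (\<Sum>i<l. ?B $$ (t, i) * mom i j))"
    by (subst sum.swap) (simp add: sum_distrib_left mult.assoc)
  also have "\<dots> = (\<Sum>t<l. if t = j then mom ?L t else 0)"
    using ginv_left_inverse[OF det_mom _ j(1)] by (intro sum.cong) auto
  also have "\<dots> = mom ?L j" using j(1) by simp
  finally show ?thesis by simp
qed

lemma typeII_Aplus_polys:
  assumes "a < p1"
  shows "typeII \<sigma> M p1 w1 p2 w2 (\<lambda>a'. nuv n1 p1 l a' + unitv a a') a (nuv n2 p2 l) (Aplus_polys l a)"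
proof -
  have bound: "\<forall>k\<ge>nuv n1 p1 l a' + unitv a a'. coeff (Aplus_polys l a a') k = 0" for a'
    using coeff_Aplus_polys_eq_0[OF assms] by blast
  have "degree (Aplus_polys l a a) = nuv n1 p1 l a"
  proof (rule antisym)
    show "degree (Aplus_polys l a a) \<le> nuv n1 p1 l a"
      using bound[of a] by (intro degree_le) (simp add: unitv_def)
    show "nuv n1 p1 l a \<le> degree (Aplus_polys l a a)"
      using coeff_Aplus_polys_top[OF assms] by (intro le_degree) simp
  qed
  then show ?thesis
    using bound coeff_Aplus_polys_top[OF assms] mint_Aplus_polys_orthogonal[OF assms]
    by (simp add: typeII_def coeffs_vanish_iff_degree_less unitv_def)
qed

definition Aminus_polys :: "nat \<Rightarrow> nat \<Rightarrow> nat \<Rightarrow> real poly" where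
  "Aminus_polys l b = poly_of_coeffs n1 p1 (\<lambda>i. ginv mom (Suc l) $$ (lminus n2 p2 l b, i)) {..<Suc l}"

lemma poly_Aminus_polys: "poly (Aminus_polys l b a') = Aminus mom n1 p1 n2 p2 l b a'"
  by (simp add: fun_eq_iff Aminus_polys_def poly_poly_of_coeffs Aminus_def del: lessThan_Suc)

lemma mint_Aminus_polys:
  assumes ex: "\<exists>m\<le>l. aidx n2 p2 m = b" and "b' < p2" "k < nuv n2 p2 (Suc l) b'"
  shows "mint \<sigma> M (\<lambda>x. linform p1 w1 (Aminus_polys l b) x * w2 b' x * x ^ k)
    = (if b' = b \<and> k = nuv n2 p2 (Suc l) b - 1 then 1 else 0)"
proof -
  let ?L = "lminus n2 p2 l b"
  obtain j where j: "j < Suc l" "aidx n2 p2 j = b'" "kidx n2 p2 j = k"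
    using kidx_surj[OF comp2 assms(3)] by blast
  have "mint \<sigma> M (\<lambda>x. linform p1 w1 (Aminus_polys l b) x * w2 b' x * x ^ k)
      = (\<Sum>i<Suc l. ginv mom (Suc l) $$ (?L, i) * mom i j)"
    using mint_linform_poly_of_coeffs[of "{..<Suc l}" _ j] j
    by (simp add: Aminus_polys_def del: lessThan_Suc)
  also have "\<dots> = (if ?L = j then 1 else 0)"
    using ginv_left_inverse[OF det_mom _ j(1)] lminus_le[OF comp2 ex] by simp
  also have "?L = j \<longleftrightarrow> b' = b \<and> k = nuv n2 p2 (Suc l) b - 1"
    using aidx_lminus[OF comp2 ex] kidx_lminus[OF comp2 ex] j aidx_kidx_inj[OF comp2, of ?L j]
    by auto
  finally show ?thesis .
qed

lemma typeI_Aminus_polys: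
  assumes "\<exists>m\<le>l. aidx n2 p2 m = b"
  shows "typeI \<sigma> M p1 w1 p2 w2 (nuv n1 p1 (Suc l)) (nuv n2 p2 (Suc l)) b (Aminus_polys l b)"
proof -
  have "\<forall>k\<ge>nuv n1 p1 (Suc l) a. coeff (Aminus_polys l b a) k = 0" for a
    unfolding Aminus_polys_def using kidx_less_nuv[OF comp1]
    by (intro allI impI coeff_poly_of_coeffs_eq_0) auto
  then show ?thesis
    using mint_Aminus_polys[OF assms] by (simp add: typeI_def coeffs_vanish_iff_degree_less)
qed

lemma Aplus_typeII_system:
  assumes "a < p1"
  shows "\<exists>P. (\<forall>a'<p1. poly (P a') = Aplus mom n1 p1 l a a')
        \<and> typeII \<sigma> M p1 w1 p2 w2 (\<lambda>a'. nuv n1 p1 l a' + unitv a a') a (nuv n2 p2 l) P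
        \<and> (\<forall>R. typeII \<sigma> M p1 w1 p2 w2 (\<lambda>a'. nuv n1 p1 l a' + unitv a a') a (nuv n2 p2 l) R
               \<longrightarrow> (\<forall>a'<p1. R a' = P a'))"
  using poly_Aplus_polys[OF assms] typeII_Aplus_polys[OF assms] typeII_unique by blast

lemma Aminus_typeI_system:
  assumes "\<exists>m\<le>l. aidx n2 p2 m = b"
  shows "\<exists>P. (\<forall>a'<p1. poly (P a') = Aminus mom n1 p1 n2 p2 l b a')
        \<and> typeI \<sigma> M p1 w1 p2 w2 (nuv n1 p1 (Suc l)) (nuv n2 p2 (Suc l)) b P
        \<and> (\<forall>R. typeI \<sigma> M p1 w1 p2 w2 (nuv n1 p1 (Suc l)) (nuv n2 p2 (Suc l)) b R
               \<longrightarrow> (\<forall>a'<p1. R a' = P a'))"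
  using poly_Aminus_polys typeI_Aminus_polys[OF assms] typeI_unique by blast

end

lemma Aplus_transpose:
  assumes "Determinant.det (gtrunc G l) \<noteq> 0"
  shows "Aplus (\<lambda>i j. G j i) n p l b b' = Abarplus G n p l b b'"
proof
  fix x
  have "ginv (\<lambda>i j. G j i) l $$ (j, i) = ginv G l $$ (i, j)" if "i < l" "j < l" for i j
    using that ginv_inverse(3)[OF assms] by (simp add: ginv_transpose[OF assms])
  then have "(\<Sum>i<l. \<Sum>j<l. G j (lplus n p l b) * ginv (\<lambda>i j. G j i) l $$ (j, i) * chi n p b' x i)
      = (\<Sum>i<l. \<Sum>j<l. chi n p b' x i * ginv G l $$ (i, j) * G j (lplus n p l b))"
    by (intro sum.cong refl) (simp add: mult_ac)
  then show "Aplus (\<lambda>i j. G j i) n p l b b' x = Abarplus G n p l b b' x"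
    by (simp add: Aplus_def Abarplus_def)
qed

lemma Aminus_transpose:
  assumes "Determinant.det (gtrunc G (Suc l)) \<noteq> 0" "lminus n1 p1 l a \<le> l"
  shows "Aminus (\<lambda>i j. G j i) n2 p2 n1 p1 l a b' = Abarminus G n1 p1 n2 p2 l a b'"
proof
  fix x
  have "ginv (\<lambda>i j. G j i) (Suc l) $$ (lminus n1 p1 l a, i) = ginv G (Suc l) $$ (i, lminus n1 p1 l a)"
    if "i < Suc l" for i
    using that assms(2) ginv_inverse(3)[OF assms(1)] by (simp add: ginv_transpose[OF assms(1)])
  then show "Aminus (\<lambda>i j. G j i) n2 p2 n1 p1 l a b' x = Abarminus G n1 p1 n2 p2 l a b' x"
    unfolding Aminus_def Abarminus_def by (intro sum.cong refl) (simp add: mult.commute)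
qed

theorem proposition2p20:
  fixes M :: "real measure" and \<sigma> :: real and \<Delta> :: "real set"
    and p1 p2 :: nat and n1 n2 :: "nat \<Rightarrow> nat"
    and w1 w2 :: "nat \<Rightarrow> real \<Rightarrow> real" and l :: nat
  defines "G \<equiv> gmom \<sigma> M n1 p1 n2 p2 w1 w2"
  assumes fin: "finite_measure M" and borel: "sets M = sets borel"
    and sgn: "\<sigma> = 1 \<or> \<sigma> = -1"
    and intv: "is_interval \<Delta>" and conc: "AE x in M. x \<in> \<Delta>"
    and supp: "infinite (msupport M)"
    and w1: "\<forall>a<p1. integrable M (w1 a) \<and> sign_definite M (w1 a)"
    and w2: "\<forall>b<p2. integrable M (w2 b) \<and> sign_definite M (w2 b)"
    and moments: "\<forall>a<p1. \<forall>b<p2. \<forall>k. integrable M (\<lambda>x. x ^ k * w1 a x * w2 b x)"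
    and comp1: "composition n1 p1" and comp2: "composition n2 p2"
    and perf: "perfect \<sigma> M p1 w1 p2 w2"
  shows
   "(\<forall>a<p1. \<exists>P. (\<forall>a'<p1. poly (P a') = Aplus G n1 p1 l a a')
        \<and> typeII \<sigma> M p1 w1 p2 w2 (\<lambda>a'. nuv n1 p1 l a' + unitv a a') a (nuv n2 p2 l) P
        \<and> (\<forall>R. typeII \<sigma> M p1 w1 p2 w2 (\<lambda>a'. nuv n1 p1 l a' + unitv a a') a (nuv n2 p2 l) R
               \<longrightarrow> (\<forall>a'<p1. R a' = P a'))) \<and>
    (\<forall>b<p2. (\<exists>m\<le>l. aidx n2 p2 m = b) \<longrightarrow>
      (\<exists>P. (\<forall>a'<p1. poly (P a') = Aminus G n1 p1 n2 p2 l b a')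
        \<and> typeI \<sigma> M p1 w1 p2 w2 (nuv n1 p1 (Suc l)) (nuv n2 p2 (Suc l)) b P
        \<and> (\<forall>R. typeI \<sigma> M p1 w1 p2 w2 (nuv n1 p1 (Suc l)) (nuv n2 p2 (Suc l)) b R
               \<longrightarrow> (\<forall>a'<p1. R a' = P a')))) \<and>
    (\<forall>b<p2. \<exists>P. (\<forall>b'<p2. poly (P b') = Abarplus G n2 p2 l b b')
        \<and> typeII \<sigma> M p2 w2 p1 w1 (\<lambda>b'. nuv n2 p2 l b' + unitv b b') b (nuv n1 p1 l) P
        \<and> (\<forall>R. typeII \<sigma> M p2 w2 p1 w1 (\<lambda>b'. nuv n2 p2 l b' + unitv b b') b (nuv n1 p1 l) R
               \<longrightarrow> (\<forall>b'<p2. R b' = P b'))) \<and>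
    (\<forall>a<p1. (\<exists>m\<le>l. aidx n1 p1 m = a) \<longrightarrow>
      (\<exists>P. (\<forall>b'<p2. poly (P b') = Abarminus G n1 p1 n2 p2 l a b')
        \<and> typeI \<sigma> M p2 w2 p1 w1 (nuv n2 p2 (Suc l)) (nuv n1 p1 (Suc l)) a P
        \<and> (\<forall>R. typeI \<sigma> M p2 w2 p1 w1 (nuv n2 p2 (Suc l)) (nuv n1 p1 (Suc l)) a R
               \<longrightarrow> (\<forall>b'<p2. R b' = P b'))))"
  \<comment> \<open>The measure-theoretic hypotheses are the paper's standing assumptions; the
    argument only needs perfectness, the compositions and the integrability of the moments.\<close>
proof -
  interpret mixed_moments \<sigma> M n1 p1 n2 p2 w1 w2
    using comp1 comp2 moments by unfold_locales
  have G: "truncations_nonsingular G"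
    unfolding G_def using truncations_nonsingular_if_perfect[OF perf] .
  then have det: "Determinant.det (gtrunc G L) \<noteq> 0" for L
    by (simp add: truncations_nonsingular_def)
  have swap: "gmom \<sigma> M n2 p2 n1 p1 w2 w1 = (\<lambda>i j. G j i)"
    by (simp add: G_def gmom_def fun_eq_iff add.commute mult_ac)
  interpret fwd: regular_mixed_moments \<sigma> M n1 p1 n2 p2 w1 w2
    using G unfolding G_def by unfold_locales
  interpret bwd: regular_mixed_moments \<sigma> M n2 p2 n1 p1 w2 w1
    using comp1 comp2 moments truncations_nonsingular_transpose[OF G]
    by unfold_locales (auto simp: swap mult_ac)
  show ?thesis
    using fwd.Aplus_typeII_system fwd.Aminus_typeI_system
      bwd.Aplus_typeII_system bwd.Aminus_typeI_system
    by (simp add: G_def[symmetric] swap Aplus_transpose[OF det] Aminus_transpose[OF det]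
        lminus_le[OF comp1])
qed

end
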